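(* Let $G=(V,E)$ be a graph, $v\in V$, and $S_v$ the partial star product of $v$. (a) If $e=(v,u),f=(v,w)\in E_v$ satisfy $(e,f)\notin\mathfrak d_v^*$, then $e$ and $f$ span exactly one square in $G$, this square is chordless, and its top vertex $x$ is unique, i.e. $u$ and $w$ are the only common neighbours of $v$ and $x$ in $G$. (b) Conversely, if $x$ is a non-primal vertex of $S_v$, then there is exactly one chordless square in $S_v$ that contains $x$ and is spanned by two edges $e,f\in E_v$ with $(e,f)\notin\mathfrak d_v^*$.
   Context: All graphs are finite, simple and undirected. For a graph $G=(V,E)$ and $v\in V$, $E_v$ denotes the set of edges incident to $v$. For two distinct adjacent edges $e=(v,u)$, $f=(v,w)$, a square spanned by $e$ and $f$ is a $4$-cycle $v,u,x,w,v$ in $G$ with $x\notin\{v,u,w\}$; $x$ is its top vertex. The square is chordless if neither $(u,w)$ nor $(v,x)$ is an edge of $G$. In a chordless square $v,u,x,w$, the edge $(x,w)$ is the opposite edge of $(v,u)$ and $(x,u)$ is the opposite edge of $(v,w)$ (and vice versa). The relation $\delta(G)\subseteq E\times E$: $(e,f)\in\delta(G)$ iff (i) $e,f$ are distinct adjacent edges and it is not the case that $e$ and $f$ span exactly one square and that square is chordless; or (ii) $e$ and $f$ are opposite edges of a chordless square; or (iii) $e=f$. For a reflexive symmetric relation $R$, $R^*$ denotes its transitive closure (finest equivalence relation containing $R$). Define $\mathfrak d_v=((E_v\times E)\cup(E\times E_v))\cap\delta(G)$ and $\mathfrak d_v^*$ the finest equivalence relation on $E$ containing $\mathfrak d_v$.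 Let $F_v\subseteq E\setminus E_v$ be the set of edges that are the edges not incident to $v$ of some chordless square spanned by two edges $e,e'\in E_v$ with $(e,e')\notin\mathfrak d_v^*$. The partial star product (PSP) $S_v$ is the subgraph of $G$ with edge set $E_v\cup F_v$ and vertex set the set of endpoints of these edges; $v$ is its center, neighbours of $v$ are its primal vertices, and the remaining vertices of $S_v$ other than $v$ are non-primal vertices. *)

theory Defs
  imports Main
begin

definition simple_graph :: "'a set \<Rightarrow> 'a set set \<Rightarrow> bool" where
  "simple_graph V E \<longleftrightarrow> finite V \<and>
     (\<forall>e\<in>E. \<exists>a b. a \<noteq> b \<and> a \<in> V \<and> b \<in> V \<and> e = {a, b})"

definition inc_edges :: "'a set set \<Rightarrow> 'a \<Rightarrow> 'a set set" where
  "inc_edges E v = {e \<in> E. v \<in> e}"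

definition adjacent_edges :: "'a set set \<Rightarrow> 'a set \<Rightarrow> 'a set \<Rightarrow> bool" where
  "adjacent_edges E e f \<longleftrightarrow> e \<in> E \<and> f \<in> E \<and> e \<noteq> f \<and> e \<inter> f \<noteq> {}"

text \<open>The squares v,u,x,w,v spanned by e = (v,u) and f = (v,w), as tuples (v,u,x,w);
  x is the top vertex.\<close>
definition squares :: "'a set set \<Rightarrow> 'a set \<Rightarrow> 'a set \<Rightarrow> ('a \<times> 'a \<times> 'a \<times> 'a) set" where
  "squares E e f = {(v, u, x, w). e \<in> E \<and> f \<in> E \<and> e = {v, u} \<and> f = {v, w} \<and>
      v \<noteq> u \<and> v \<noteq> w \<and> u \<noteq> w \<and> x \<notin> {v, u, w} \<and> {u, x} \<in> E \<and> {x, w} \<in> E}"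

definition chordless :: "'a set set \<Rightarrow> ('a \<times> 'a \<times> 'a \<times> 'a) \<Rightarrow> bool" where
  "chordless E s = (case s of (v, u, x, w) \<Rightarrow> {u, w} \<notin> E \<and> {v, x} \<notin> E)"

definition chordless_square :: "'a set set \<Rightarrow> 'a \<Rightarrow> 'a \<Rightarrow> 'a \<Rightarrow> 'a \<Rightarrow> bool" where
  "chordless_square E v u x w \<longleftrightarrow> distinct [v, u, x, w] \<and>
     {v, u} \<in> E \<and> {u, x} \<in> E \<and> {x, w} \<in> E \<and> {w, v} \<in> E \<and>
     {u, w} \<notin> E \<and> {v, x} \<notin> E"

definition opposite_edges :: "'a set set \<Rightarrow> 'a set \<Rightarrow> 'a set \<Rightarrow> bool" where
  "opposite_edges E e f \<longleftrightarrow> (\<exists>v u x w. chordless_square E v u x w \<and>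
     ((e = {v, u} \<and> f = {x, w}) \<or> (e = {x, w} \<and> f = {v, u}) \<or>
      (e = {v, w} \<and> f = {x, u}) \<or> (e = {x, u} \<and> f = {v, w})))"

definition delta :: "'a set set \<Rightarrow> ('a set \<times> 'a set) set" where
  "delta E = {(e, f). e \<in> E \<and> f \<in> E \<and>
     ((adjacent_edges E e f \<and>
        \<not> (card (squares E e f) = 1 \<and> (\<forall>s \<in> squares E e f. chordless E s)))
      \<or> opposite_edges E e f \<or> e = f)}"

definition equiv_closure :: "'b set \<Rightarrow> ('b \<times> 'b) set \<Rightarrow> ('b \<times> 'b) set" where
  "equiv_closure A R = (Id_on A \<union> R \<union> R\<inverse>)\<^sup>+"

definition dv :: "'a set set \<Rightarrow> 'a \<Rightarrow> ('a set \<times> 'a set) set" where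
  "dv E v = ((inc_edges E v \<times> E) \<union> (E \<times> inc_edges E v)) \<inter> delta E"

definition dv_star :: "'a set set \<Rightarrow> 'a \<Rightarrow> ('a set \<times> 'a set) set" where
  "dv_star E v = equiv_closure E (dv E v)"

definition Fv :: "'a set set \<Rightarrow> 'a \<Rightarrow> 'a set set" where
  "Fv E v = {g. \<exists>u x w. {v, u} \<in> inc_edges E v \<and> {v, w} \<in> inc_edges E v \<and>
      chordless_square E v u x w \<and> ({v, u}, {v, w}) \<notin> dv_star E v \<and>
      (g = {u, x} \<or> g = {x, w})}"

definition psp_edges :: "'a set set \<Rightarrow> 'a \<Rightarrow> 'a set set" where
  "psp_edges E v = inc_edges E v \<union> Fv E v"

definition psp_vertices :: "'a set set \<Rightarrow> 'a \<Rightarrow> 'a set" where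
  "psp_vertices E v = \<Union> (psp_edges E v)"

definition non_primal :: "'a set set \<Rightarrow> 'a \<Rightarrow> 'a \<Rightarrow> bool" where
  "non_primal E v x \<longleftrightarrow> x \<in> psp_vertices E v \<and> x \<noteq> v \<and> {v, x} \<notin> E"

end

theory Submission
  imports Defs
begin

text \<open>If \<open>{v,u}\<close> and \<open>{v,w}\<close> are not d_v*-related, they are not delta-related either,
  so by the definition of delta they span exactly one square, which is chordless. Its top
  vertex \<open>x\<close> has no common neighbour with \<open>v\<close> besides \<open>u\<close> and \<open>w\<close>: a third one \<open>y\<close> would
  give the edges \<open>{v,w}\<close> and \<open>{x,w}\<close> the two squares through \<open>u\<close> and \<open>y\<close>, making them
  delta-related, while \<open>{x,w}\<close> is opposite to \<open>{v,u}\<close>; this chain links \<open>{v,u}\<close> to \<open>{v,w}\<close>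
  in d_v*. A non-primal vertex of S_v lies on an edge of F_v, hence is the top of such
  a square, and the common-neighbour property determines that square.\<close>

lemma simple_graph_edge_neq:
  assumes "simple_graph V E" and "{a, b} \<in> E" shows "a \<noteq> b"
proof -
  obtain c d where "c \<noteq> d" "{a, b} = {c, d}" using assms unfolding simple_graph_def by blast
  then show ?thesis by (metis doubleton_eq_iff insert_absorb2)
qed

lemma insert_in_inc_edges_iff [simp]: "{v, u} \<in> inc_edges E v \<longleftrightarrow> {v, u} \<in> E"
  by (simp add: inc_edges_def)

lemma chordless_square_imp_chordless:
  "chordless_square E v u x w \<Longrightarrow> chordless E (v, u, x, w)"
  by (simp add: chordless_square_def chordless_def)

lemma dv_star_trans: "(e, f) \<in> dv_star E v \<Longrightarrow> (f, g) \<in> dv_star E v \<Longrightarrow> (e, g) \<in> dv_star E v"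
  unfolding dv_star_def equiv_closure_def by (rule trancl_trans)

lemma delta_at_imp_dv_star:
  assumes "{v, u} \<in> E" and "(e, {v, u}) \<in> delta E \<or> ({v, u}, e) \<in> delta E"
  shows "(e, {v, u}) \<in> dv_star E v" and "({v, u}, e) \<in> dv_star E v"
  using assms unfolding dv_star_def equiv_closure_def dv_def delta_def inc_edges_def by blast+

lemma not_dv_star_unique_square:
  assumes G: "simple_graph V E" and vu: "{v, u} \<in> E" and vw: "{v, w} \<in> E"
    and nd: "({v, u}, {v, w}) \<notin> dv_star E v"
  obtains x where "squares E {v, u} {v, w} = {(v, u, x, w)}" "chordless_square E v u x w"
proof -
  have "u \<noteq> v" "w \<noteq> v" using simple_graph_edge_neq[OF G] vu vw by blast+
  moreover have "u \<noteq> w"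
    using nd vu unfolding dv_star_def equiv_closure_def by auto
  ultimately have adj: "adjacent_edges E {v, u} {v, w}"
    using vu vw by (auto simp: adjacent_edges_def doubleton_eq_iff)
  have "({v, u}, {v, w}) \<notin> delta E" using delta_at_imp_dv_star(1)[OF vw] nd by blast
  then have "card (squares E {v, u} {v, w}) = 1"
    and chordless: "\<forall>s\<in>squares E {v, u} {v, w}. chordless E s"
    using adj vu vw by (auto simp: delta_def)
  then obtain s where sq: "squares E {v, u} {v, w} = {s}" by (meson card_1_singletonE)
  obtain v' u' x w' where s: "s = (v', u', x, w')" by (cases s)
  with sq have "(v', u', x, w') \<in> squares E {v, u} {v, w}" by simp
  then have "{v, u} = {v', u'}" "{v, w} = {v', w'}" "v' \<noteq> u'" "v' \<noteq> w'" "u' \<noteq> w'"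
    by (auto simp: squares_def)
  with \<open>u \<noteq> w\<close> have "v' = v" "u' = u" "w' = w" by (metis doubleton_eq_iff)+
  with sq s have sq': "squares E {v, u} {v, w} = {(v, u, x, w)}" by simp
  then have "(v, u, x, w) \<in> squares E {v, u} {v, w}" and "chordless E (v, u, x, w)"
    using chordless by auto
  then have "chordless_square E v u x w"
    by (auto simp: squares_def chordless_def chordless_square_def insert_commute)
  with sq' show thesis by (rule that)
qed

lemma not_dv_star_common_neighbours:
  assumes G: "simple_graph V E" and cs: "chordless_square E v u x w"
    and nd: "({v, u}, {v, w}) \<notin> dv_star E v"
  shows "{y. {v, y} \<in> E \<and> {x, y} \<in> E} = {u, w}"
proof -
  have vu: "{v, u} \<in> E" and ux: "{u, x} \<in> E" and xw: "{x, w} \<in> E" and vw: "{v, w} \<in> E"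
    and dist: "distinct [v, u, x, w]"
    using cs by (auto simp: chordless_square_def insert_commute)
  have "y \<in> {u, w}" if vy: "{v, y} \<in> E" and xy: "{x, y} \<in> E" for y
  proof (rule ccontr)
    assume y: "y \<notin> {u, w}"
    have "y \<noteq> v" "y \<noteq> x" using simple_graph_edge_neq[OF G] vy xy by blast+
    have "opposite_edges E {v, u} {x, w}"
      unfolding opposite_edges_def using cs by blast
    with vu xw have "({v, u}, {x, w}) \<in> delta E" by (simp add: delta_def)
    then have opp: "({v, u}, {x, w}) \<in> dv_star E v" using delta_at_imp_dv_star(2)[OF vu] by blast
    have "(w, v, u, x) \<in> squares E {v, w} {x, w}" "(w, v, y, x) \<in> squares E {v, w} {x, w}"
      using vw xw vu ux vy xy dist y \<open>y \<noteq> v\<close> \<open>y \<noteq> x\<close>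
      by (auto simp: squares_def insert_commute)
    with y have "card (squares E {v, w} {x, w}) \<noteq> 1" by (auto simp: card_1_singleton_iff)
    moreover have "adjacent_edges E {v, w} {x, w}"
      using vw xw dist by (auto simp: adjacent_edges_def doubleton_eq_iff)
    ultimately have "({v, w}, {x, w}) \<in> delta E"
      using vw xw by (auto simp: delta_def)
    then have "({x, w}, {v, w}) \<in> dv_star E v" using delta_at_imp_dv_star(1)[OF vw] by blast
    with nd show False using dv_star_trans[OF opp] by simp
  qed
  then show ?thesis using vu vw ux xw by (auto simp: insert_commute)
qed

lemma Fv_subset: "Fv E v \<subseteq> E"
  unfolding Fv_def chordless_square_def by auto

lemma psp_edges_subset: "psp_edges E v \<subseteq> E"
  unfolding psp_edges_def inc_edges_def using Fv_subset[of E v] by auto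

lemma non_primal_top_of_square:
  assumes G: "simple_graph V E" and np: "non_primal E v x"
  obtains u w where "chordless_square E v u x w" "({v, u}, {v, w}) \<notin> dv_star E v"
proof -
  have "x \<noteq> v" "{v, x} \<notin> E" and "x \<in> psp_vertices E v"
    using np by (auto simp: non_primal_def)
  then obtain g where g: "g \<in> psp_edges E v" "x \<in> g" by (auto simp: psp_vertices_def)
  have "g \<notin> inc_edges E v"
  proof
    assume "g \<in> inc_edges E v"
    then have "g \<in> E" "v \<in> g" by (auto simp: inc_edges_def)
    with G obtain a b where "g = {a, b}" by (auto simp: simple_graph_def)
    with \<open>g \<in> E\<close> \<open>v \<in> g\<close> g(2) \<open>x \<noteq> v\<close> \<open>{v, x} \<notin> E\<close> show False by (auto simp: insert_commute)
  qed
  with g have "g \<in> Fv E v" by (auto simp: psp_edges_def)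
  then obtain u x' w where cs: "chordless_square E v u x' w"
    and nd: "({v, u}, {v, w}) \<notin> dv_star E v" and "g = {u, x'} \<or> g = {x', w}"
    unfolding Fv_def by blast
  with g(2) \<open>{v, x} \<notin> E\<close> have "x' = x" by (auto simp: chordless_square_def insert_commute)
  with cs nd show thesis by (intro that) simp_all
qed

lemma chordless_square_in_psp_edges:
  assumes cs: "chordless_square E v u x w" and nd: "({v, u}, {v, w}) \<notin> dv_star E v"
  shows "chordless_square (psp_edges E v) v u x w"
proof -
  have inc: "{v, u} \<in> inc_edges E v" "{v, w} \<in> inc_edges E v"
    using cs by (auto simp: chordless_square_def inc_edges_def insert_commute)
  with cs nd have "{u, x} \<in> Fv E v" "{x, w} \<in> Fv E v"
    unfolding Fv_def by blast+
  with cs inc psp_edges_subset[of E v] show ?thesis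
    unfolding chordless_square_def psp_edges_def by (auto simp: insert_commute)
qed

lemma not_dv_star_four_cycle_chordless:
  assumes G: "simple_graph V E" and dist: "distinct [v, u, x, w]"
    and edges: "{v, u} \<in> E" "{u, x} \<in> E" "{x, w} \<in> E" "{v, w} \<in> E"
    and nd: "({v, u}, {v, w}) \<notin> dv_star E v"
  shows "chordless_square E v u x w"
proof -
  obtain x' where sq: "squares E {v, u} {v, w} = {(v, u, x', w)}"
    and cs: "chordless_square E v u x' w"
    using not_dv_star_unique_square[OF G edges(1,4) nd] .
  have "(v, u, x, w) \<in> squares E {v, u} {v, w}"
    using dist edges by (auto simp: squares_def)
  with sq cs show ?thesis by simp
qed

text \<open>The non-primal vertex \<open>x\<close> can only be the top of a square through \<open>v\<close>, since it is not
  adjacent to \<open>v\<close>.\<close>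
lemma psp_square_through_non_primal:
  assumes G: "simple_graph V E" and np: "non_primal E v x"
    and cs: "chordless_square (psp_edges E v) v u x' w" and x: "x \<in> {v, u, x', w}"
    and nd: "({v, u}, {v, w}) \<notin> dv_star E v"
  shows "x' = x" and "{y. {v, y} \<in> E \<and> {x, y} \<in> E} = {u, w}"
proof -
  have dist: "distinct [v, u, x', w]"
    and edges: "{v, u} \<in> E" "{u, x'} \<in> E" "{x', w} \<in> E" "{v, w} \<in> E"
    using cs psp_edges_subset[of E v] by (auto simp: chordless_square_def insert_commute)
  then show "x' = x"
    using np x by (auto simp: non_primal_def insert_commute)
  with not_dv_star_common_neighbours[OF G not_dv_star_four_cycle_chordless[OF G dist edges nd] nd]
  show "{y. {v, y} \<in> E \<and> {x, y} \<in> E} = {u, w}" by simp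
qed

lemma psp_squares_through_non_primal_eq:
  assumes G: "simple_graph V E" and np: "non_primal E v x"
    and cs1: "chordless_square (psp_edges E v) v u1 x1 w1" "x \<in> {v, u1, x1, w1}"
      "({v, u1}, {v, w1}) \<notin> dv_star E v"
    and cs2: "chordless_square (psp_edges E v) v u2 x2 w2" "x \<in> {v, u2, x2, w2}"
      "({v, u2}, {v, w2}) \<notin> dv_star E v"
  shows "{{v, u1}, {u1, x1}, {x1, w1}, {w1, v}} = {{v, u2}, {u2, x2}, {x2, w2}, {w2, v}}"
proof -
  from psp_square_through_non_primal[OF G np cs1] psp_square_through_non_primal[OF G np cs2]
  have "x1 = x2" and "{u1, w1} = {u2, w2}" by simp_all
  then have "x1 = x2" and "(u1 = u2 \<and> w1 = w2) \<or> (u1 = w2 \<and> w1 = u2)"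
    by (metis doubleton_eq_iff)+
  then show ?thesis by (auto simp: insert_commute)
qed

theorem lemma3p2:
  fixes V :: "'a set" and E :: "'a set set" and v :: 'a
  assumes G: "simple_graph V E" and vV: "v \<in> V"
  shows "(\<forall>u w. {v, u} \<in> inc_edges E v \<and> {v, w} \<in> inc_edges E v \<and>
             ({v, u}, {v, w}) \<notin> dv_star E v \<longrightarrow>
             (\<exists>x. squares E {v, u} {v, w} = {(v, u, x, w)} \<and>
                  chordless E (v, u, x, w) \<and>
                  {y. {v, y} \<in> E \<and> {x, y} \<in> E} = {u, w}))
       \<and> (\<forall>x. non_primal E v x \<longrightarrow>
             (\<exists>!Q. \<exists>u x' w. Q = {{v, u}, {u, x'}, {x', w}, {w, v}} \<and>
                  x \<in> {v, u, x', w} \<and>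
                  chordless_square (psp_edges E v) v u x' w \<and>
                  {v, u} \<in> inc_edges E v \<and> {v, w} \<in> inc_edges E v \<and>
                  ({v, u}, {v, w}) \<notin> dv_star E v))"
proof (intro conjI allI impI)
  fix u w assume "{v, u} \<in> inc_edges E v \<and> {v, w} \<in> inc_edges E v \<and>
    ({v, u}, {v, w}) \<notin> dv_star E v"
  then have vu: "{v, u} \<in> E" and vw: "{v, w} \<in> E" and nd: "({v, u}, {v, w}) \<notin> dv_star E v"
    by simp_all
  obtain x where "squares E {v, u} {v, w} = {(v, u, x, w)}" and cs: "chordless_square E v u x w"
    using not_dv_star_unique_square[OF G vu vw nd] .
  with chordless_square_imp_chordless[OF cs] not_dv_star_common_neighbours[OF G cs nd]
  show "\<exists>x. squares E {v, u} {v, w} = {(v, u, x, w)} \<and> chordless E (v, u, x, w) \<and>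
      {y. {v, y} \<in> E \<and> {x, y} \<in> E} = {u, w}" by blast
next
  fix x assume np: "non_primal E v x"
  then obtain u w where cs: "chordless_square E v u x w" and nd: "({v, u}, {v, w}) \<notin> dv_star E v"
    by (rule non_primal_top_of_square[OF G])
  have inc: "{v, u} \<in> inc_edges E v" "{v, w} \<in> inc_edges E v"
    using cs by (auto simp: chordless_square_def inc_edges_def insert_commute)
  note psp = chordless_square_in_psp_edges[OF cs nd]
  show "\<exists>!Q. \<exists>u x' w. Q = {{v, u}, {u, x'}, {x', w}, {w, v}} \<and> x \<in> {v, u, x', w} \<and>
      chordless_square (psp_edges E v) v u x' w \<and>
      {v, u} \<in> inc_edges E v \<and> {v, w} \<in> inc_edges E v \<and> ({v, u}, {v, w}) \<notin> dv_star E v"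
  proof (rule ex1I[of _ "{{v, u}, {u, x}, {x, w}, {w, v}}"])
    show "\<exists>u' x' w'. {{v, u}, {u, x}, {x, w}, {w, v}} = {{v, u'}, {u', x'}, {x', w'}, {w', v}} \<and>
        x \<in> {v, u', x', w'} \<and> chordless_square (psp_edges E v) v u' x' w' \<and>
        {v, u'} \<in> inc_edges E v \<and> {v, w'} \<in> inc_edges E v \<and> ({v, u'}, {v, w'}) \<notin> dv_star E v"
      using psp inc nd by blast
  qed (elim exE conjE, simp add: psp_squares_through_non_primal_eq[OF G np _ _ _ psp _ nd])
qed

end
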